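(* Let $f_{s_1d}, f_{s_1r}, f_{rd}, g_{rd}^{s_1}, g_{s_1d}^{r}\in[0,1]$ satisfy $0\le g_{s_1d}^{r}\le f_{s_1d}$ and $0\le g_{rd}^{s_1}< f_{rd}$. Set $T_1=(1-f_{s_1d})f_{s_1r}$ and assume $T_1>0$. For $x\in[0,1]$ define $$\mu_1(x)=(1-x)(f_{s_1d}+T_1)+x\,g_{s_1d}^{r},$$ $$\mu_{u_1}^{\mathrm{SBC}}(x)=\frac{f_{rd}}{(1-x)T_1+f_{rd}-x\,g_{rd}^{s_1}}\,\mu_1(x),\qquad \mu_{u_1}^{\mathrm{DBC}}(x)=\frac{x\,f_{rd}}{(1-x)T_1+x f_{rd}-x\,g_{rd}^{s_1}}\,\mu_1(x).$$ Suppose $$f_{rd}-g_{rd}^{s_1}\le \min\left\{\frac{g_{s_1d}^{r}(T_1+f_{rd})}{T_1+f_{s_1d}},\ \frac{(T_1+g_{rd}^{s_1})^2(f_{s_1d}+T_1)}{T_1(f_{s_1d}+T_1-g_{s_1d}^{r})}-(T_1+2g_{rd}^{s_1})\right\}.$$ Then $$\max_{0\le \beta\le 1}\min\{\mu_1(\beta),\mu_{u_1}^{\mathrm{SBC}}(\beta)\}=\max_{0\le \alpha\le 1}\min\{\mu_1(\alpha),\mu_{u_1}^{\mathrm{DBC}}(\alpha)\}=\Big(1-\frac{T_1}{T_1+g_{rd}^{s_1}}\Big)(f_{s_1d}+T_1)+\frac{T_1}{T_1+g_{rd}^{s_1}}\,g_{s_1d}^{r}.$$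
   Context: This is the single-source case ($w_1=1$) of a cooperative relaying system with source $s_1$, relay $r$, destination $d$. Here $f_{mn}$ is the probability that link $(m,n)$ is not in outage (for Rayleigh fading, $f_{mn}=\exp(-(2^R-1)/(P\rho_{m,n}^2))$), and $g_{mn}^{I}$ is the probability that link $(m,n)$ is not in outage when node $I$ transmits simultaneously (so $g_{mn}^I\le f_{mn}$). The quantity $\min\{\mu_1,\mu_{u_1}^{\mathrm{SBC}}\}$ (resp. $\min\{\mu_1,\mu_{u_1}^{\mathrm{DBC}}\}$) is the maximal stable throughput of $s_1$ under the sensing-based (resp. decision-based) cooperative scheme as a function of the relay's interference probability $\beta$ (resp. $\alpha$); the theorem states the two schemes attain the same optimal maximal stable throughput under the displayed condition. *)

theory Defs
  imports Complex_Main
begin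

definition T1 :: "real \<Rightarrow> real \<Rightarrow> real" where
  "T1 fsd fsr = (1 - fsd) * fsr"

definition mu1 :: "real \<Rightarrow> real \<Rightarrow> real \<Rightarrow> real \<Rightarrow> real" where
  "mu1 fsd fsr gsd x = (1 - x) * (fsd + T1 fsd fsr) + x * gsd"

definition mu_SBC :: "real \<Rightarrow> real \<Rightarrow> real \<Rightarrow> real \<Rightarrow> real \<Rightarrow> real \<Rightarrow> real" where
  "mu_SBC fsd fsr frd grd gsd x =
     frd / ((1 - x) * T1 fsd fsr + frd - x * grd) * mu1 fsd fsr gsd x"

definition mu_DBC :: "real \<Rightarrow> real \<Rightarrow> real \<Rightarrow> real \<Rightarrow> real \<Rightarrow> real \<Rightarrow> real" where
  "mu_DBC fsd fsr frd grd gsd x =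
     x * frd / ((1 - x) * T1 fsd fsr + x * frd - x * grd) * mu1 fsd fsr gsd x"

definition is_max_on :: "(real \<Rightarrow> real) \<Rightarrow> real set \<Rightarrow> real \<Rightarrow> bool" where
  "is_max_on h S v \<longleftrightarrow> (\<exists>x\<in>S. h x = v) \<and> (\<forall>x\<in>S. h x \<le> v)"

end

theory Submission
  imports Defs
begin

text \<open>Let \<open>g = g\<^sub>r\<^sub>d\<close> and \<open>x\<^sub>0 = T\<^sub>1 / (T\<^sub>1 + g)\<close>. At \<open>x\<^sub>0\<close> both relay rates coincide with
  \<open>\<mu>\<^sub>1\<close>, because their denominators collapse to \<open>f\<^sub>r\<^sub>d\<close> resp. \<open>x\<^sub>0 f\<^sub>r\<^sub>d\<close>. To the right of
  \<open>x\<^sub>0\<close> the decreasing affine \<open>\<mu>\<^sub>1\<close> stays below \<open>\<mu>\<^sub>1(x\<^sub>0)\<close>; to the left, \<open>T\<^sub>1 + g\<close> times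
  the numerator of \<open>\<mu>\<^sub>1(x\<^sub>0) - \<mu>\<^sub>u\<^sub>1(x)\<close> factors as \<open>T\<^sub>1 - (T\<^sub>1 + g) x\<close> times a quantity
  whose sign is exactly what the first (SBC) resp. second (DBC) part of the hypothesis on
  \<open>f\<^sub>r\<^sub>d - g\<close> guarantees.\<close>

lemma is_max_on_min_at_crossing:
  assumes "x\<^sub>0 \<in> S" "f x\<^sub>0 = v" "g x\<^sub>0 = v"
    and "\<And>x. x \<in> S \<Longrightarrow> x\<^sub>0 \<le> x \<Longrightarrow> f x \<le> v"
    and "\<And>x. x \<in> S \<Longrightarrow> x \<le> x\<^sub>0 \<Longrightarrow> g x \<le> v"
  shows "is_max_on (\<lambda>x. min (f x) (g x)) S v"
  unfolding is_max_on_def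
proof
  show "\<exists>x\<in>S. min (f x) (g x) = v" using assms(1-3) by force
  show "\<forall>x\<in>S. min (f x) (g x) \<le> v"
    using assms(4,5) by (metis linear min.coboundedI1 min.coboundedI2)
qed

text \<open>Below, \<open>\<mu>\<^sub>1(x) = a - b x\<close> with \<open>a = f\<^sub>s\<^sub>d + T\<^sub>1\<close>, \<open>b = a - g\<^sub>s\<^sub>d\<close>, and \<open>T\<close>, \<open>F\<close>, \<open>G\<close>
  stand for \<open>T\<^sub>1\<close>, \<open>f\<^sub>r\<^sub>d\<close>, \<open>g\<^sub>r\<^sub>d\<close>.\<close>

lemma sbc_rate_at_crossing:
  fixes a b T F G :: real
  assumes "T + G > 0" "F > 0"
  shows "F * (a - b * (T / (T + G))) / ((T + F) - (T + G) * (T / (T + G)))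
         = a - b * (T / (T + G))"
  using assms by simp

lemma dbc_rate_at_crossing:
  fixes a b T F G :: real
  assumes "T > 0" "G \<ge> 0" "F > 0"
  shows "T / (T + G) * F * (a - b * (T / (T + G)))
           / ((1 - T / (T + G)) * T + T / (T + G) * F - T / (T + G) * G)
         = a - b * (T / (T + G))"
proof -
  have "T / (T + G) * (T + G) = T" using assms(1,2) by simp
  moreover have "(1 - T / (T + G)) * T + T / (T + G) * F - T / (T + G) * G
      = T / (T + G) * F + (T - T / (T + G) * (T + G))"
    by (simp add: algebra_simps add_divide_distrib)
  ultimately have "(1 - T / (T + G)) * T + T / (T + G) * F - T / (T + G) * G = T / (T + G) * F"
    by simp
  then show ?thesis using assms by simp
qed

lemma sbc_rate_le_before_crossing:
  fixes a b T F G x :: real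
  assumes "T > 0" "G \<ge> 0" "F > 0" "b * (T + F) \<le> a * (T + G)"
    and "(T + G) * x \<le> T"
  shows "F * (a - b * x) / ((T + F) - (T + G) * x) \<le> a - b * (T / (T + G))"
proof -
  define d where "d = T + G"
  define v where "v = a - b * (T / d)"
  have "d > 0" using assms(1,2) d_def by simp
  have vd: "v * d = a * d - b * T" using \<open>d > 0\<close> by (simp add: v_def field_simps)
  have factor: "d * (v * ((T + F) - d * x) - F * (a - b * x))
                = (T - d * x) * (a * d - b * (T + F))"
  proof -
    have "d * (v * ((T + F) - d * x) - F * (a - b * x))
          = (v * d) * ((T + F) - d * x) - d * F * (a - b * x)"
      by (simp add: algebra_simps)
    also have "\<dots> = (T - d * x) * (a * d - b * (T + F))"
      unfolding vd by (simp add: algebra_simps)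
    finally show ?thesis .
  qed
  have "(T - d * x) * (a * d - b * (T + F)) \<ge> 0"
    using assms(4,5) d_def by simp
  then have "F * (a - b * x) \<le> v * ((T + F) - d * x)"
    using factor \<open>d > 0\<close> by (metis diff_ge_0_iff_ge zero_le_mult_iff not_le)
  moreover have "(T + F) - d * x > 0" using assms(3,5) d_def by simp
  ultimately show ?thesis by (simp add: divide_le_eq v_def d_def)
qed

lemma dbc_rate_le_before_crossing:
  fixes a b T F G x :: real
  assumes "T > 0" "0 \<le> G" "G < F" "b \<ge> 0" "b * T * (T + G + F) \<le> a * (T + G)\<^sup>2"
    and "0 \<le> x" "(T + G) * x \<le> T"
  shows "x * F * (a - b * x) / ((1 - x) * T + x * F - x * G) \<le> a - b * (T / (T + G))"
proof -
  define d where "d = T + G"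
  define v where "v = a - b * (T / d)"
  have "d > 0" using assms(1,2) d_def by simp
  have "T * x \<le> T * 1" using assms(7) mult_nonneg_nonneg[OF assms(2,6)] by (simp add: algebra_simps)
  then have "x \<le> 1" using assms(1) by (simp only: mult_le_cancel_left_pos)
  have den: "(1 - x) * T + x * F - x * G > 0"
  proof (cases "x = 0")
    case False
    then have "x * (F - G) > 0" using assms(3,6) by simp
    moreover have "(1 - x) * T \<ge> 0" using \<open>x \<le> 1\<close> assms(1) by simp
    ultimately show ?thesis by (simp add: algebra_simps)
  qed (use assms(1) in simp)
  have vd: "v * d = a * d - b * T" using \<open>d > 0\<close> by (simp add: v_def field_simps)
  have factor: "d * (v * ((1 - x) * T + x * F - x * G) - x * F * (a - b * x))
                = (T - d * x) * (a * d - b * T - b * F * x)"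
  proof -
    have denominator: "(1 - x) * T + x * F - x * G = T - d * x + x * F"
      by (simp add: d_def algebra_simps)
    have "d * (v * ((1 - x) * T + x * F - x * G) - x * F * (a - b * x))
          = (v * d) * (T - d * x + x * F) - d * x * F * (a - b * x)"
      unfolding denominator by (simp add: algebra_simps)
    also have "\<dots> = (T - d * x) * (a * d - b * T - b * F * x)"
      unfolding vd by (simp add: algebra_simps)
    finally show ?thesis .
  qed
  have "d * (a * d - b * T - b * F * x) \<ge> 0"
  proof -
    have "b * F * (d * x) \<le> b * F * T"
      using assms(2-4,7) d_def by (simp add: mult_left_mono)
    moreover have "b * F * T \<le> a * d * d - b * T * d"
      using assms(5) d_def by (simp add: algebra_simps power2_eq_square)
    ultimately show ?thesis by (simp add: algebra_simps)
  qed
  then have "(T - d * x) * (a * d - b * T - b * F * x) \<ge> 0"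
    using \<open>d > 0\<close> assms(7) d_def by (simp add: zero_le_mult_iff)
  then have "x * F * (a - b * x) \<le> v * ((1 - x) * T + x * F - x * G)"
    using factor \<open>d > 0\<close> by (metis diff_ge_0_iff_ge zero_le_mult_iff not_le)
  with den show ?thesis by (simp add: divide_le_eq v_def d_def)
qed

lemma max_min_rates_at_crossing:
  fixes a b T F G :: real
  assumes "T > 0" "0 \<le> G" "G < F" "b \<ge> 0"
    and sbc: "b * (T + F) \<le> a * (T + G)"
    and dbc: "b * T * (T + G + F) \<le> a * (T + G)\<^sup>2"
  shows "is_max_on (\<lambda>x. min (a - b * x) (F * (a - b * x) / ((T + F) - (T + G) * x)))
           {0..1} (a - b * (T / (T + G)))"
    and "is_max_on (\<lambda>x. min (a - b * x) (x * F * (a - b * x) / ((1 - x) * T + x * F - x * G)))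
           {0..1} (a - b * (T / (T + G)))"
proof -
  have "T + G > 0" "F > 0" using assms(1-3) by simp_all
  have x\<^sub>0: "T / (T + G) \<in> {0..1}" using assms(1,2) by simp
  have left: "(T + G) * x \<le> T" if "x \<le> T / (T + G)" for x
    using that \<open>T + G > 0\<close> by (simp add: le_divide_eq mult.commute)
  have right: "a - b * x \<le> a - b * (T / (T + G))" if "T / (T + G) \<le> x" for x
    using mult_left_mono[OF that assms(4)] by simp
  show "is_max_on (\<lambda>x. min (a - b * x) (F * (a - b * x) / ((T + F) - (T + G) * x)))
           {0..1} (a - b * (T / (T + G)))"
  proof (rule is_max_on_min_at_crossing[OF x\<^sub>0])
    show "F * (a - b * (T / (T + G))) / ((T + F) - (T + G) * (T / (T + G)))
          = a - b * (T / (T + G))"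
      using sbc_rate_at_crossing \<open>T + G > 0\<close> \<open>F > 0\<close> .
    show "F * (a - b * x) / ((T + F) - (T + G) * x) \<le> a - b * (T / (T + G))"
      if "x \<le> T / (T + G)" for x
      using sbc_rate_le_before_crossing[OF assms(1,2) \<open>F > 0\<close> sbc left[OF that]] .
  qed (blast intro: right)+
  show "is_max_on (\<lambda>x. min (a - b * x) (x * F * (a - b * x) / ((1 - x) * T + x * F - x * G)))
           {0..1} (a - b * (T / (T + G)))"
  proof (rule is_max_on_min_at_crossing[OF x\<^sub>0])
    show "T / (T + G) * F * (a - b * (T / (T + G)))
            / ((1 - T / (T + G)) * T + T / (T + G) * F - T / (T + G) * G)
          = a - b * (T / (T + G))"
      using dbc_rate_at_crossing assms(1,2) \<open>F > 0\<close> .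
    show "x * F * (a - b * x) / ((1 - x) * T + x * F - x * G) \<le> a - b * (T / (T + G))"
      if "x \<in> {0..1}" "x \<le> T / (T + G)" for x
    proof -
      from that(1) have "0 \<le> x" by simp
      from dbc_rate_le_before_crossing[OF assms(1-4) dbc this left[OF that(2)]] show ?thesis .
    qed
  qed (blast intro: right)+
qed

lemma mu1_eq:
  "mu1 fsd fsr gsd x = (fsd + T1 fsd fsr) - (fsd + T1 fsd fsr - gsd) * x"
  by (simp add: mu1_def algebra_simps)

lemma mu_SBC_eq:
  "mu_SBC fsd fsr frd grd gsd x
     = frd * ((fsd + T1 fsd fsr) - (fsd + T1 fsd fsr - gsd) * x)
         / ((T1 fsd fsr + frd) - (T1 fsd fsr + grd) * x)"
proof -
  have "(1 - x) * T1 fsd fsr + frd - x * grd = (T1 fsd fsr + frd) - (T1 fsd fsr + grd) * x"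
    by (simp add: algebra_simps)
  then show ?thesis by (simp add: mu_SBC_def mu1_eq)
qed

lemma mu_DBC_eq:
  "mu_DBC fsd fsr frd grd gsd x
     = x * frd * ((fsd + T1 fsd fsr) - (fsd + T1 fsd fsr - gsd) * x)
         / ((1 - x) * T1 fsd fsr + x * frd - x * grd)"
  by (simp add: mu_DBC_def mu1_eq)

theorem theorem1:
  fixes fsd fsr frd grd gsd :: real
  assumes "fsd \<in> {0..1}" "fsr \<in> {0..1}" "frd \<in> {0..1}" "grd \<in> {0..1}" "gsd \<in> {0..1}"
    and "0 \<le> gsd" "gsd \<le> fsd"
    and "0 \<le> grd" "grd < frd"
    and "T1 fsd fsr > 0"
    and "frd - grd \<le> min
           (gsd * (T1 fsd fsr + frd) / (T1 fsd fsr + fsd))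
           ((T1 fsd fsr + grd)^2 * (fsd + T1 fsd fsr)
              / (T1 fsd fsr * (fsd + T1 fsd fsr - gsd)) - (T1 fsd fsr + 2 * grd))"
  shows "is_max_on (\<lambda>b. min (mu1 fsd fsr gsd b) (mu_SBC fsd fsr frd grd gsd b)) {0..1}
           ((1 - T1 fsd fsr / (T1 fsd fsr + grd)) * (fsd + T1 fsd fsr)
              + T1 fsd fsr / (T1 fsd fsr + grd) * gsd)
       \<and> is_max_on (\<lambda>a. min (mu1 fsd fsr gsd a) (mu_DBC fsd fsr frd grd gsd a)) {0..1}
           ((1 - T1 fsd fsr / (T1 fsd fsr + grd)) * (fsd + T1 fsd fsr)
              + T1 fsd fsr / (T1 fsd fsr + grd) * gsd)"
proof -
  let ?T = "T1 fsd fsr"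
  let ?a = "fsd + ?T"
  let ?b = "?a - gsd"
  have "?T > 0" "?b > 0" using assms(1,7,10) by simp_all
  have "(frd - grd) * (?T + fsd) \<le> gsd * (?T + frd)"
    using assms(1,11) \<open>?T > 0\<close> by (simp add: le_divide_eq)
  then have sbc: "?b * (?T + frd) \<le> ?a * (?T + grd)"
    by (simp add: algebra_simps)
  have "frd - grd \<le> (?T + grd)\<^sup>2 * ?a / (?T * ?b) - (?T + 2 * grd)"
    using assms(11) by (simp add: add.commute)
  then have "?T + grd + frd \<le> (?T + grd)\<^sup>2 * ?a / (?T * ?b)"
    by simp
  then have "(?T + grd + frd) * (?T * ?b) \<le> (?T + grd)\<^sup>2 * ?a"
    using mult_pos_pos[OF \<open>?T > 0\<close> \<open>?b > 0\<close>] by (simp only: pos_le_divide_eq)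
  then have dbc: "?b * ?T * (?T + grd + frd) \<le> ?a * (?T + grd)\<^sup>2"
    by (simp add: ac_simps)
  have affine: "(1 - x) * ?a + x * gsd = ?a - ?b * x" for x
    by (simp add: algebra_simps)
  show ?thesis
    using max_min_rates_at_crossing[OF \<open>?T > 0\<close> assms(8,9) less_imp_le[OF \<open>?b > 0\<close>] sbc dbc]
    by (simp only: mu1_eq mu_SBC_eq mu_DBC_eq affine simp_thms)
qed

end
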